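(* Let $n\ge1$, $m_1,\dots,m_n\in\mathbb{N}$, and let $U_1,\dots,U_n$ be independent standard Gaussian random variables. For real variables $x=(x_{ij})_{1\le i,j\le n}$ set $X_i=\sum_{j=1}^n x_{ij}U_j$, $1\le i\le n$. Then the function $$P(x)=E\Big[\prod_{j=1}^n X_j^{2m_j}\Big]$$ is a polynomial in the $n^2$ variables $x_{ij}$ which admits a sum-of-squares representation, i.e. $P=\sum_{i=1}^p f_i^2$ for some real-coefficient polynomials $f_1,\dots,f_p$ in the variables $x_{ij}$.
   Context: A sum-of-squares (SOS) representation of a multivariate real polynomial is an expression of it as $\sum_{i=1}^p f_i^2$ with each $f_i$ a real-coefficient polynomial. *)

theory Defs
  imports "HOL-Probability.Probability"
begin

text \<open>A point is a function nat*nat => real; over the infinite field R, polynomial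
  functions correspond exactly to real-coefficient polynomials.\<close>
inductive poly_fun :: "(nat \<times> nat) set \<Rightarrow> ((nat \<times> nat \<Rightarrow> real) \<Rightarrow> real) \<Rightarrow> bool"
  for V :: "(nat \<times> nat) set" where
  pf_const: "poly_fun V (\<lambda>x. c)"
| pf_var: "v \<in> V \<Longrightarrow> poly_fun V (\<lambda>x. x v)"
| pf_add: "poly_fun V f \<Longrightarrow> poly_fun V g \<Longrightarrow> poly_fun V (\<lambda>x. f x + g x)"
| pf_mult: "poly_fun V f \<Longrightarrow> poly_fun V g \<Longrightarrow> poly_fun V (\<lambda>x. f x * g x)"

definition is_sos :: "(nat \<times> nat) set \<Rightarrow> ((nat \<times> nat \<Rightarrow> real) \<Rightarrow> real) \<Rightarrow> bool" where
  "is_sos V P \<longleftrightarrow> (\<exists>fs. (\<forall>f\<in>set fs. poly_fun V f) \<and> (\<forall>x. P x = (\<Sum>f\<leftarrow>fs. (f x)\<^sup>2)))"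

end

theory Submission
  imports Defs
begin

text \<open>The integrand is the square of
  \<open>Y(x, \<omega>) = \<Prod>j (\<Sum>k x\<^sub>j\<^sub>k U\<^sub>k \<omega>)^m\<^sub>j\<close>, and expanding the product writes
  \<open>Y(x, \<omega>) = \<Sum>i c\<^sub>i(x) f\<^sub>i(\<omega>)\<close> with polynomial coefficients \<open>c\<^sub>i\<close> and random variables
  \<open>f\<^sub>i\<close> having moments of all orders. Hence \<open>P(x) = c(x)\<^sup>T G c(x)\<close> for the Gram matrix
  \<open>G\<^sub>i\<^sub>k = E[f\<^sub>i f\<^sub>k]\<close>, which is positive semidefinite. Diagonalising \<open>G\<close> by successive
  completion of squares (Schur complements) turns this quadratic form into a sum of squares
  of linear combinations of the \<open>c\<^sub>i\<close>.\<close>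

lemma poly_fun_sum:
  "(\<And>i. i \<in> A \<Longrightarrow> poly_fun V (f i)) \<Longrightarrow> poly_fun V (\<lambda>x. \<Sum>i\<in>A. f i x)"
  by (induction A rule: infinite_finite_induct) (simp_all add: poly_fun.intros)

lemma poly_fun_sum_list_power2:
  "(\<And>f. f \<in> set fs \<Longrightarrow> poly_fun V f) \<Longrightarrow> poly_fun V (\<lambda>x. \<Sum>f\<leftarrow>fs. (f x)\<^sup>2)"
  by (induction fs) (simp_all add: poly_fun.intros power2_eq_square)

lemma is_sos_imp_poly_fun:
  assumes "is_sos V P" shows "poly_fun V P"
proof -
  obtain fs where "\<forall>f\<in>set fs. poly_fun V f" and "P = (\<lambda>x. \<Sum>f\<leftarrow>fs. (f x)\<^sup>2)"
    using assms unfolding is_sos_def by auto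
  then show ?thesis
    using poly_fun_sum_list_power2 by blast
qed

lemma is_sos_0: "is_sos V (\<lambda>x. 0)"
  unfolding is_sos_def by (rule exI[of _ "[]"]) simp

lemma is_sos_power2: "poly_fun V f \<Longrightarrow> is_sos V (\<lambda>x. (f x)\<^sup>2)"
  unfolding is_sos_def by (rule exI[of _ "[f]"]) simp

lemma is_sos_add:
  assumes "is_sos V P" "is_sos V Q"
  shows "is_sos V (\<lambda>x. P x + Q x)"
proof -
  obtain fs gs where "\<forall>f\<in>set fs. poly_fun V f" "\<forall>g\<in>set gs. poly_fun V g"
    and "\<And>x. P x = (\<Sum>f\<leftarrow>fs. (f x)\<^sup>2)" "\<And>x. Q x = (\<Sum>g\<leftarrow>gs. (g x)\<^sup>2)"
    using assms unfolding is_sos_def by metis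
  then show ?thesis
    unfolding is_sos_def by (intro exI[of _ "fs @ gs"]) auto
qed

definition quad_form :: "nat \<Rightarrow> (nat \<Rightarrow> nat \<Rightarrow> real) \<Rightarrow> (nat \<Rightarrow> real) \<Rightarrow> real" where
  "quad_form N G z = (\<Sum>i<N. \<Sum>k<N. G i k * z i * z k)"

lemma quad_form_cong: "(\<And>i. i < N \<Longrightarrow> z i = w i) \<Longrightarrow> quad_form N G z = quad_form N G w"
  unfolding quad_form_def by simp

lemma quad_form_Suc:
  assumes "\<And>i k. G i k = G k i"
  shows "quad_form (Suc N) G z = quad_form N G z + 2 * z N * (\<Sum>k<N. G N k * z k) + G N N * (z N)\<^sup>2"
proof -
  have "quad_form (Suc N) G z = quad_form N G z + (\<Sum>i<N. G i N * z i * z N)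
      + (\<Sum>k<N. G N k * z N * z k) + G N N * z N * z N"
    unfolding quad_form_def by (simp add: sum.distrib algebra_simps)
  also have "(\<Sum>i<N. G i N * z i * z N) = z N * (\<Sum>k<N. G N k * z k)"
    by (simp add: sum_distrib_left assms mult_ac)
  also have "(\<Sum>k<N. G N k * z N * z k) = z N * (\<Sum>k<N. G N k * z k)"
    by (simp add: sum_distrib_left mult_ac)
  finally show ?thesis by (simp add: power2_eq_square)
qed

lemma psd_quad_form_zero_diag_imp_zero_row:
  assumes sym: "\<And>i k. G i k = G k i" and psd: "\<And>z. 0 \<le> quad_form (Suc N) G z"
    and "G N N = 0"
  shows "(\<Sum>k<N. G N k * z k) = 0"
proof (rule ccontr)
  define s where "s = (\<Sum>k<N. G N k * z k)"
  assume "s \<noteq> 0"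
  define t where "t = - (quad_form N G z + 1) / (2 * s)"
  have "0 \<le> quad_form (Suc N) G (z(N := t))" by (rule psd)
  also have "\<dots> = quad_form N G z + 2 * t * s"
    using \<open>G N N = 0\<close> by (simp add: quad_form_Suc[OF sym] quad_form_cong[of N "z(N := t)" z] s_def)
  also have "\<dots> = -1"
    using \<open>s \<noteq> 0\<close> by (simp add: t_def field_simps)
  finally show False by simp
qed

lemma quad_form_Schur_complement:
  assumes sym: "\<And>i k. G i k = G k i" and "G N N \<noteq> 0"
  shows "quad_form (Suc N) G z
    = quad_form N (\<lambda>i k. G i k - G N i * G N k / G N N) z + (\<Sum>k<Suc N. G N k * z k)\<^sup>2 / G N N"
proof -
  define s where "s = (\<Sum>k<N. G N k * z k)"
  have "quad_form N (\<lambda>i k. G i k - G N i * G N k / G N N) z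
      = quad_form N G z - (\<Sum>i<N. \<Sum>k<N. (G N i * z i) * (G N k * z k)) / G N N"
    unfolding quad_form_def by (simp add: algebra_simps sum_subtractf sum_divide_distrib)
  also have "(\<Sum>i<N. \<Sum>k<N. (G N i * z i) * (G N k * z k)) = s\<^sup>2"
    unfolding s_def power2_eq_square sum_product ..
  finally have "quad_form N (\<lambda>i k. G i k - G N i * G N k / G N N) z = quad_form N G z - s\<^sup>2 / G N N" .
  moreover have "quad_form (Suc N) G z = quad_form N G z + 2 * z N * s + G N N * (z N)\<^sup>2"
    unfolding s_def by (rule quad_form_Suc[OF sym])
  moreover have "(\<Sum>k<Suc N. G N k * z k) = s + G N N * z N"
    by (simp add: s_def)
  ultimately show ?thesis
    using \<open>G N N \<noteq> 0\<close> by (simp add: power2_eq_square field_simps)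
qed

lemma psd_quad_form_Suc_split:
  assumes sym: "\<And>i k. G i k = G k i" and psd: "\<And>z. 0 \<le> quad_form (Suc N) G z"
  obtains G' d where "\<And>i k. G' i k = G' k i" "\<And>z. 0 \<le> quad_form N G' z"
    "\<And>z. quad_form (Suc N) G z = quad_form N G' z + (\<Sum>k<Suc N. d k * z k)\<^sup>2"
proof (cases "G N N = 0")
  case True
  have row: "(\<Sum>k<N. G N k * z k) = 0" for z
    by (rule psd_quad_form_zero_diag_imp_zero_row[OF sym psd True])
  have split: "quad_form (Suc N) G z = quad_form N G z" for z
    by (simp add: quad_form_Suc[OF sym] row True)
  have "0 \<le> quad_form N G z" for z
    using psd[of z] by (simp add: split)
  with sym show ?thesis
    by (rule that[where d = "\<lambda>_. 0"]) (simp add: split)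
next
  case False
  define a where "a = G N N"
  define G' where "G' = (\<lambda>i k. G i k - G N i * G N k / a)"
  have "0 \<le> quad_form (Suc N) G (\<lambda>i. if i = N then 1 else 0)" by (rule psd)
  with False have "0 < a"
    by (simp add: a_def quad_form_def)
  have split: "quad_form (Suc N) G z = quad_form N G' z + (\<Sum>k<Suc N. G N k / sqrt a * z k)\<^sup>2" for z
  proof -
    have "(\<Sum>k<Suc N. G N k * z k)\<^sup>2 / a = (\<Sum>k<Suc N. G N k / sqrt a * z k)\<^sup>2"
      using \<open>0 < a\<close> by (simp add: power_divide sum_divide_distrib[symmetric])
    then show ?thesis
      using quad_form_Schur_complement[of G N z, OF sym False] by (simp add: G'_def a_def)
  qed
  have psd': "0 \<le> quad_form N G' z" for z
  proof -
    \<comment> \<open>the last coordinate of \<open>w\<close> is chosen so that the square in \<open>split\<close> vanishes\<close>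
    define w where "w = z(N := - (\<Sum>k<N. G N k * z k) / a)"
    have "(\<Sum>k<Suc N. G N k / sqrt a * w k) = 0"
      using \<open>0 < a\<close> by (simp add: w_def a_def times_divide_eq_left sum_divide_distrib[symmetric])
    then have "quad_form N G' w = quad_form (Suc N) G w"
      by (simp add: split)
    also have "quad_form N G' w = quad_form N G' z"
      by (rule quad_form_cong) (simp add: w_def)
    finally show ?thesis using psd by simp
  qed
  have sym': "G' i k = G' k i" for i k
    using sym[of i k] by (simp add: G'_def mult.commute)
  show ?thesis
    by (rule that[OF sym' psd' split])
qed

lemma psd_quad_form_poly_fun_is_sos:
  assumes "\<And>i k. G i k = G k i" "\<And>z. 0 \<le> quad_form N G z" "\<And>i. i < N \<Longrightarrow> poly_fun V (c i)"
  shows "is_sos V (\<lambda>x. quad_form N G (\<lambda>i. c i x))"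
  using assms
proof (induction N arbitrary: G)
  case 0
  show ?case by (simp add: quad_form_def is_sos_0)
next
  case (Suc N)
  obtain G' d where G': "\<And>i k. G' i k = G' k i" "\<And>z. 0 \<le> quad_form N G' z"
    and split: "\<And>z. quad_form (Suc N) G z = quad_form N G' z + (\<Sum>k<Suc N. d k * z k)\<^sup>2"
    using psd_quad_form_Suc_split[OF Suc.prems(1,2)] by blast
  have "is_sos V (\<lambda>x. quad_form N G' (\<lambda>i. c i x))"
    using Suc.IH[OF G'] Suc.prems(3) by simp
  moreover have "poly_fun V (\<lambda>x. \<Sum>k<Suc N. d k * c k x)"
    using Suc.prems(3) by (intro poly_fun_sum poly_fun.intros) auto
  ultimately show ?case
    unfolding split by (rule is_sos_add[OF _ is_sos_power2])
qed

definition has_moments :: "'a measure \<Rightarrow> ('a \<Rightarrow> real) \<Rightarrow> bool" where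
  "has_moments M f \<longleftrightarrow> f \<in> borel_measurable M \<and> (\<forall>p. integrable M (\<lambda>\<omega>. \<bar>f \<omega>\<bar> ^ p))"

lemma has_moments_integrable: "has_moments M f \<Longrightarrow> integrable M f"
proof -
  assume "has_moments M f"
  then have "f \<in> borel_measurable M" "integrable M (\<lambda>\<omega>. \<bar>f \<omega>\<bar> ^ 1)"
    unfolding has_moments_def by blast+
  then show "integrable M f"
    by (simp add: integrable_abs_iff)
qed

lemma (in prob_space) has_moments_const: "has_moments M (\<lambda>\<omega>. c)"
  unfolding has_moments_def by auto

lemma has_moments_mult:
  assumes f: "has_moments M f" and g: "has_moments M g"
  shows "has_moments M (\<lambda>\<omega>. f \<omega> * g \<omega>)"
  unfolding has_moments_def
proof (intro conjI allI)
  have fm: "f \<in> borel_measurable M" and gm: "g \<in> borel_measurable M"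
    using f g unfolding has_moments_def by auto
  then show "(\<lambda>\<omega>. f \<omega> * g \<omega>) \<in> borel_measurable M"
    by (rule borel_measurable_times)
  fix p
  have bound: "\<bar>a * b\<bar> ^ p \<le> \<bar>a\<bar> ^ (2 * p) + \<bar>b\<bar> ^ (2 * p)" for a b :: real
  proof -
    have "\<bar>a * b\<bar> ^ p = \<bar>a\<bar> ^ p * \<bar>b\<bar> ^ p"
      by (simp add: abs_mult power_mult_distrib)
    also have "\<dots> \<le> 2 * \<bar>a\<bar> ^ p * \<bar>b\<bar> ^ p"
      by simp
    also have "\<dots> \<le> (\<bar>a\<bar> ^ p)\<^sup>2 + (\<bar>b\<bar> ^ p)\<^sup>2"
      by (rule sum_squares_bound)
    also have "\<dots> = \<bar>a\<bar> ^ (2 * p) + \<bar>b\<bar> ^ (2 * p)"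
      by (simp only: power_mult[symmetric] mult.commute)
    finally show ?thesis .
  qed
  show "integrable M (\<lambda>\<omega>. \<bar>f \<omega> * g \<omega>\<bar> ^ p)"
  proof (rule Bochner_Integration.integrable_bound)
    show "integrable M (\<lambda>\<omega>. \<bar>f \<omega>\<bar> ^ (2 * p) + \<bar>g \<omega>\<bar> ^ (2 * p))"
      using f g unfolding has_moments_def by auto
    show "(\<lambda>\<omega>. \<bar>f \<omega> * g \<omega>\<bar> ^ p) \<in> borel_measurable M"
      using fm gm by (intro borel_measurable_power borel_measurable_abs borel_measurable_times)
    show "AE \<omega> in M. norm (\<bar>f \<omega> * g \<omega>\<bar> ^ p) \<le> norm (\<bar>f \<omega>\<bar> ^ (2 * p) + \<bar>g \<omega>\<bar> ^ (2 * p))"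
      using bound by simp
  qed
qed

lemma std_normal_has_moments:
  assumes "distributed M lborel X (\<lambda>u. ennreal (std_normal_density u))"
  shows "has_moments M X"
  unfolding has_moments_def
proof (intro conjI allI)
  show "X \<in> borel_measurable M"
    using distributed_measurable[OF assms] by simp
  show "integrable M (\<lambda>\<omega>. \<bar>X \<omega>\<bar> ^ p)" for p
    using distributed_integrable[OF assms, of "\<lambda>u. \<bar>u\<bar> ^ p"] integrable_std_normal_moment_abs[of p]
    by simp
qed

definition poly_moment_expansion ::
    "(nat \<times> nat) set \<Rightarrow> 'a measure \<Rightarrow> ((nat \<times> nat \<Rightarrow> real) \<Rightarrow> 'a \<Rightarrow> real) \<Rightarrow> bool" where
  "poly_moment_expansion V M F \<longleftrightarrow> (\<exists>ts. (\<forall>(c, f) \<in> set ts. poly_fun V c \<and> has_moments M f) \<and>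
     (\<forall>x \<omega>. F x \<omega> = (\<Sum>(c, f)\<leftarrow>ts. c x * f \<omega>)))"

lemma poly_moment_expansion_term:
  "poly_fun V c \<Longrightarrow> has_moments M f \<Longrightarrow> poly_moment_expansion V M (\<lambda>x \<omega>. c x * f \<omega>)"
  unfolding poly_moment_expansion_def by (rule exI[of _ "[(c, f)]"]) simp

lemma poly_moment_expansion_0: "poly_moment_expansion V M (\<lambda>x \<omega>. 0)"
  unfolding poly_moment_expansion_def by (rule exI[of _ "[]"]) simp

lemma (in prob_space) poly_moment_expansion_1: "poly_moment_expansion V M (\<lambda>x \<omega>. 1)"
  using poly_moment_expansion_term[OF poly_fun.pf_const has_moments_const, of V 1 1] by simp

lemma poly_moment_expansion_add:
  assumes "poly_moment_expansion V M F" "poly_moment_expansion V M G"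
  shows "poly_moment_expansion V M (\<lambda>x \<omega>. F x \<omega> + G x \<omega>)"
proof -
  obtain ts us where "\<forall>(c, f) \<in> set ts. poly_fun V c \<and> has_moments M f"
    and "\<forall>(c, f) \<in> set us. poly_fun V c \<and> has_moments M f"
    and "\<And>x \<omega>. F x \<omega> = (\<Sum>(c, f)\<leftarrow>ts. c x * f \<omega>)" "\<And>x \<omega>. G x \<omega> = (\<Sum>(c, f)\<leftarrow>us. c x * f \<omega>)"
    using assms unfolding poly_moment_expansion_def by metis
  then show ?thesis
    unfolding poly_moment_expansion_def by (intro exI[of _ "ts @ us"]) auto
qed

lemma poly_moment_expansion_mult:
  assumes "poly_moment_expansion V M F" "poly_moment_expansion V M G"
  shows "poly_moment_expansion V M (\<lambda>x \<omega>. F x \<omega> * G x \<omega>)"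
proof -
  obtain ts us where ts: "\<forall>(c, f) \<in> set ts. poly_fun V c \<and> has_moments M f"
    and us: "\<forall>(c, f) \<in> set us. poly_fun V c \<and> has_moments M f"
    and F: "\<And>x \<omega>. F x \<omega> = (\<Sum>(c, f)\<leftarrow>ts. c x * f \<omega>)"
    and G: "\<And>x \<omega>. G x \<omega> = (\<Sum>(c, f)\<leftarrow>us. c x * f \<omega>)"
    using assms unfolding poly_moment_expansion_def by metis
  define vs where "vs = [(\<lambda>x. c x * d x, \<lambda>\<omega>. f \<omega> * g \<omega>). (c, f) \<leftarrow> ts, (d, g) \<leftarrow> us]"
  have "\<forall>(c, f) \<in> set vs. poly_fun V c \<and> has_moments M f"
    using ts us by (auto simp: vs_def intro: poly_fun.pf_mult has_moments_mult)
  moreover have "F x \<omega> * G x \<omega> = (\<Sum>(c, f)\<leftarrow>vs. c x * f \<omega>)" for x \<omega>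
    unfolding F G vs_def
    by (induction ts) (auto simp: sum_list_const_mult[symmetric] algebra_simps o_def split_def)
  ultimately show ?thesis
    unfolding poly_moment_expansion_def by blast
qed

lemma poly_moment_expansion_sum:
  "(\<And>i. i \<in> A \<Longrightarrow> poly_moment_expansion V M (F i)) \<Longrightarrow> poly_moment_expansion V M (\<lambda>x \<omega>. \<Sum>i\<in>A. F i x \<omega>)"
  by (induction A rule: infinite_finite_induct) (simp_all add: poly_moment_expansion_0 poly_moment_expansion_add)

lemma (in prob_space) poly_moment_expansion_prod:
  "(\<And>i. i \<in> A \<Longrightarrow> poly_moment_expansion V M (F i)) \<Longrightarrow> poly_moment_expansion V M (\<lambda>x \<omega>. \<Prod>i\<in>A. F i x \<omega>)"
  by (induction A rule: infinite_finite_induct) (simp_all add: poly_moment_expansion_1 poly_moment_expansion_mult)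

lemma (in prob_space) poly_moment_expansion_power:
  "poly_moment_expansion V M F \<Longrightarrow> poly_moment_expansion V M (\<lambda>x \<omega>. F x \<omega> ^ k)"
  using poly_moment_expansion_prod[of "{..<k}" V "\<lambda>_. F"] by simp

lemma integral_square_lincomb_eq_quad_form:
  assumes "\<And>i. i < N \<Longrightarrow> has_moments M (f i)"
  shows "(\<integral>\<omega>. (\<Sum>i<N. z i * f i \<omega>)\<^sup>2 \<partial>M) = quad_form N (\<lambda>i k. \<integral>\<omega>. f i \<omega> * f k \<omega> \<partial>M) z"
proof -
  have int: "integrable M (\<lambda>\<omega>. f i \<omega> * f k \<omega>)" if "i < N" "k < N" for i k
    using assms that by (intro has_moments_integrable has_moments_mult)
  have "(\<integral>\<omega>. (\<Sum>i<N. z i * f i \<omega>)\<^sup>2 \<partial>M) = (\<integral>\<omega>. (\<Sum>i<N. \<Sum>k<N. z i * z k * (f i \<omega> * f k \<omega>)) \<partial>M)"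
    by (simp add: power2_eq_square sum_product mult_ac)
  also have "\<dots> = (\<Sum>i<N. \<integral>\<omega>. (\<Sum>k<N. z i * z k * (f i \<omega> * f k \<omega>)) \<partial>M)"
    using int by (intro Bochner_Integration.integral_sum integrable_sum integrable_mult_right) auto
  also have "\<dots> = (\<Sum>i<N. \<Sum>k<N. z i * z k * (\<integral>\<omega>. f i \<omega> * f k \<omega> \<partial>M))"
    using int by (intro sum.cong refl) (simp add: Bochner_Integration.integral_sum integrable_mult_right)
  finally show ?thesis
    by (simp add: quad_form_def mult_ac)
qed

lemma poly_moment_expansion_integral_power2_is_sos:
  assumes "poly_moment_expansion V M F"
  shows "is_sos V (\<lambda>x. \<integral>\<omega>. (F x \<omega>)\<^sup>2 \<partial>M)"
proof -
  obtain ts where ts: "\<forall>(c, f) \<in> set ts. poly_fun V c \<and> has_moments M f"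
    and F: "\<And>x \<omega>. F x \<omega> = (\<Sum>(c, f)\<leftarrow>ts. c x * f \<omega>)"
    using assms unfolding poly_moment_expansion_def by metis
  define N where "N = length ts"
  define c where "c i = fst (ts ! i)" for i
  define f where "f i = snd (ts ! i)" for i
  have cf: "poly_fun V (c i)" "has_moments M (f i)" if "i < N" for i
    using ts nth_mem[OF that[unfolded N_def]] by (auto simp: c_def f_def)
  have F_sum: "F x \<omega> = (\<Sum>i<N. c i x * f i \<omega>)" for x \<omega>
    by (simp add: F sum_list_sum_nth atLeast0LessThan N_def c_def f_def split_def)
  define G where "G i k = (\<integral>\<omega>. f i \<omega> * f k \<omega> \<partial>M)" for i k
  have E: "(\<integral>\<omega>. (\<Sum>i<N. z i * f i \<omega>)\<^sup>2 \<partial>M) = quad_form N G z" for z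
    unfolding G_def by (rule integral_square_lincomb_eq_quad_form) (rule cf)
  have "G i k = G k i" for i k
    by (simp add: G_def mult.commute)
  moreover have "0 \<le> quad_form N G z" for z
    by (simp flip: E)
  ultimately have "is_sos V (\<lambda>x. quad_form N G (\<lambda>i. c i x))"
    using cf(1) by (rule psd_quad_form_poly_fun_is_sos)
  then show ?thesis
    by (simp add: F_sum E)
qed

theorem mainTheorem6:
  fixes M :: "'a measure" and U :: "nat \<Rightarrow> 'a \<Rightarrow> real" and n :: nat and m :: "nat \<Rightarrow> nat"
  assumes "prob_space M"
    and "n \<ge> 1"
    and "prob_space.indep_vars M (\<lambda>_. borel) U {..<n}"
    and "\<And>j. j < n \<Longrightarrow> distributed M lborel (U j) (\<lambda>u. ennreal (std_normal_density u))"
  defines "P \<equiv> (\<lambda>x. integral\<^sup>L M (\<lambda>\<omega>. \<Prod>j<n. (\<Sum>k<n. x (j, k) * U k \<omega>) ^ (2 * m j)))"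
  shows "poly_fun ({..<n} \<times> {..<n}) P \<and> is_sos ({..<n} \<times> {..<n}) P"
proof -
  interpret prob_space M by fact
  let ?V = "{..<n} \<times> {..<n}"
  define Y where "Y x \<omega> = (\<Prod>j<n. (\<Sum>k<n. x (j, k) * U k \<omega>) ^ m j)" for x \<omega>
  have "poly_moment_expansion ?V M Y"
    unfolding Y_def
    using assms(4) by (intro poly_moment_expansion_prod poly_moment_expansion_power poly_moment_expansion_sum
        poly_moment_expansion_term poly_fun.pf_var std_normal_has_moments) auto
  moreover have "P = (\<lambda>x. \<integral>\<omega>. (Y x \<omega>)\<^sup>2 \<partial>M)"
    by (simp add: P_def Y_def power_mult prod_power_distrib mult.commute[of 2])
  ultimately have "is_sos ?V P"
    by (simp add: poly_moment_expansion_integral_power2_is_sos)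
  then show ?thesis
    by (simp add: is_sos_imp_poly_fun)
qed

end
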